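(* Consider an $m$-partial SCS with schedule $(f,g)$ at time $t$, and let $\sigma$ be a simple path in a ring, starting at the position at time $t$ of one robot and ending at the position at time $t$ of another robot of the same ring. Let $A_1,\dots,A_s$ be the directed circle arcs traversed by $\sigma$ in order, following the travel direction of the ring, let $C_j$ denote the circle containing $A_j$ (the $C_j$ need not be distinct), let $t_i$ be the time required by a robot to traverse $A_i$, and let $\theta_j$ be the angular position in $C_j$ of the second endpoint of $A_j$. Then for all $1\le j\le s$, $$f(C_j)+g(C_j)\cdot 2\pi\cdot\Big(t+\sum_{i=1}^{j}t_i\Big)=\theta_j \pmod{2\pi}.$$
   Context: Let $T$ be a set of pairwise disjoint unit circles in the plane (trajectories) and $\epsilon<0.5$ a communication range; the graph of potential links $G_\epsilon(T)$ has the circle centers as nodes and an edge $\{i,j\}$ whenever the centers are at distance at most $2+\epsilon$; it is assumed connected. Points of a circle are identified with angles (modulo $2\pi$), and a robot traverses a circle (length $2\pi$) in one time unit. A schedule is a pair $(f,g)$, $f:T\to[0,2\pi)$, $g:T\to\{-1,1\}$ ($1$ = counterclockwise); the robot on $C$ is at angle $f(C)+2\pi g(C)t$ at time $t$. A communication graph $G=(V,E)$ is a connected spanning subgraph of $G_\epsilon(T)$. The link position $\phi_{ij}$ is the point of $C_i$ closest to $C_j$. A schedule is $G$-synchronized if for every $\{i,j\}\in E$ the robot on $C_i$ is at $\phi_{ij}$ exactly when the robot on $C_j$ is at $\phi_{ji}$. An SCS with communication graph $G$ consists of one robot per circle moving under a $G$-synchronized schedule with $g(C_i)=-g(C_j)$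 for all $\{i,j\}\in E$. Shifting protocol: when a robot on $C_i$ reaches $\phi_{ij}$ and there is no robot at $\phi_{ji}$, it moves to $C_j$ and thereafter follows the schedule of $C_j$. An $m$-partial SCS is obtained by removing all but $m$ robots, the remaining ones applying the shifting protocol. A ring is the closed path traversed by a robot that follows the assigned direction on each circle and always shifts to the neighboring circle at link positions. A path in a ring follows the travel direction of the ring; it is simple if it contains no full tour of the ring. *)

theory Defs
  imports "HOL-Analysis.Analysis"
begin

text \<open>Circles are unit circles identified with their centers (complex numbers).
  A point of circle C is given by an angle \<theta>, i.e. the point C + cis \<theta>.\<close>

definition ang_eq :: "real \<Rightarrow> real \<Rightarrow> bool" where
  "ang_eq x y \<longleftrightarrow> (\<exists>k::int. x - y = 2 * pi * of_int k)"

definition disjoint_unit_circles :: "complex set \<Rightarrow> bool" where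
  "disjoint_unit_circles T \<longleftrightarrow> (\<forall>a\<in>T. \<forall>b\<in>T. a \<noteq> b \<longrightarrow> cmod (a - b) > 2)"

definition pot_links :: "real \<Rightarrow> complex set \<Rightarrow> (complex \<times> complex) set" where
  "pot_links eps T = {(a, b). a \<in> T \<and> b \<in> T \<and> a \<noteq> b \<and> cmod (a - b) \<le> 2 + eps}"

definition graph_connected :: "complex set \<Rightarrow> (complex \<times> complex) set \<Rightarrow> bool" where
  "graph_connected V E \<longleftrightarrow> (\<forall>a\<in>V. \<forall>b\<in>V. (a, b) \<in> (E \<inter> (V \<times> V))\<^sup>*)"

definition comm_graph :: "real \<Rightarrow> complex set \<Rightarrow> (complex \<times> complex) set \<Rightarrow> bool" where
  "comm_graph eps T E \<longleftrightarrow> E \<subseteq> pot_links eps T \<and> sym E \<and> graph_connected T E"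

text \<open>Link position phi_ij: angle of the point of circle C_i closest to C_j.\<close>
definition link_pos :: "complex \<Rightarrow> complex \<Rightarrow> real" where
  "link_pos ci cj = Arg (cj - ci)"

text \<open>Schedule: f gives initial angle in [0,2pi), g the direction (1 = ccw, -1 = cw).\<close>
definition schedule :: "complex set \<Rightarrow> (complex \<Rightarrow> real) \<Rightarrow> (complex \<Rightarrow> real) \<Rightarrow> bool" where
  "schedule T f g \<longleftrightarrow> (\<forall>C\<in>T. 0 \<le> f C \<and> f C < 2 * pi \<and> (g C = 1 \<or> g C = -1))"

definition sched_pos :: "(complex \<Rightarrow> real) \<Rightarrow> (complex \<Rightarrow> real) \<Rightarrow> complex \<Rightarrow> real \<Rightarrow> real" where
  "sched_pos f g C t = f C + g C * 2 * pi * t"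

definition synchronized :: "(complex \<times> complex) set \<Rightarrow> (complex \<Rightarrow> real) \<Rightarrow> (complex \<Rightarrow> real) \<Rightarrow> bool" where
  "synchronized E f g \<longleftrightarrow>
     (\<forall>(a, b)\<in>E. \<forall>t::real. ang_eq (sched_pos f g a t) (link_pos a b)
                           \<longleftrightarrow> ang_eq (sched_pos f g b t) (link_pos b a))"

definition SCS :: "real \<Rightarrow> complex set \<Rightarrow> (complex \<times> complex) set \<Rightarrow> (complex \<Rightarrow> real) \<Rightarrow> (complex \<Rightarrow> real) \<Rightarrow> bool" where
  "SCS eps T E f g \<longleftrightarrow>
     finite T \<and> T \<noteq> {} \<and> disjoint_unit_circles T \<and> eps < 1/2 \<and>
     graph_connected T (pot_links eps T) \<and> comm_graph eps T E \<and>
     schedule T f g \<and> synchronized E f g \<and> (\<forall>(a, b)\<in>E. g a = - g b)"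

text \<open>Configuration of an m-partial SCS: R is the set of circles currently carrying a robot
  (at most one robot per circle); the robot on C is at angle sched_pos f g C t at time t
  (a robot always follows the schedule of the circle it is on).\<close>
definition partial_config :: "complex set \<Rightarrow> nat \<Rightarrow> complex set \<Rightarrow> bool" where
  "partial_config T m R \<longleftrightarrow> R \<subseteq> T \<and> card R = m"

text \<open>A path in a ring, given by s arcs (indices 1..s): arc j lies on circle Cs j, starts at
  angle \<alpha> j, takes time \<tau> j to traverse in the direction g (Cs j), and ends at angle \<theta> j.\<close>
definition ring_path ::
  "(complex \<times> complex) set \<Rightarrow> (complex \<Rightarrow> real) \<Rightarrow> (complex \<Rightarrow> real) \<Rightarrow> complex set \<Rightarrow> nat \<Rightarrow>
   (nat \<Rightarrow> complex) \<Rightarrow> (nat \<Rightarrow> real) \<Rightarrow> (nat \<Rightarrow> real) \<Rightarrow> (nat \<Rightarrow> real) \<Rightarrow> bool" where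
  "ring_path E f g T s Cs \<alpha> \<tau> \<theta> \<longleftrightarrow>
     1 \<le> s \<and>
     (\<forall>j\<in>{1..s}. Cs j \<in> T \<and> 0 \<le> \<tau> j \<and> \<tau> j \<le> 1 \<and>
        ang_eq (\<theta> j) (\<alpha> j + g (Cs j) * 2 * pi * \<tau> j)) \<and>
     (\<forall>j. 1 < j \<and> j < s \<longrightarrow> 0 < \<tau> j) \<and>
     (\<forall>j\<in>{1..s}. \<forall>u. 0 < u \<and> u < \<tau> j \<longrightarrow>
        (\<forall>D. (Cs j, D) \<in> E \<longrightarrow> \<not> ang_eq (\<alpha> j + g (Cs j) * 2 * pi * u) (link_pos (Cs j) D))) \<and>
     (\<forall>j. 1 \<le> j \<and> j < s \<longrightarrow>
        (Cs j, Cs (Suc j)) \<in> E \<and> ang_eq (\<theta> j) (link_pos (Cs j) (Cs (Suc j))) \<and>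
        ang_eq (\<alpha> (Suc j)) (link_pos (Cs (Suc j)) (Cs j)))"

definition simple_path ::
  "(complex \<Rightarrow> real) \<Rightarrow> nat \<Rightarrow> (nat \<Rightarrow> complex) \<Rightarrow> (nat \<Rightarrow> real) \<Rightarrow> (nat \<Rightarrow> real) \<Rightarrow> bool" where
  "simple_path g s Cs \<alpha> \<tau> \<longleftrightarrow>
     (\<forall>j\<in>{1..s}. \<forall>k\<in>{1..s}. \<forall>u v. 0 \<le> u \<and> u < \<tau> j \<and> 0 \<le> v \<and> v < \<tau> k \<and> (j, u) \<noteq> (k, v) \<longrightarrow>
        \<not> (Cs j = Cs k \<and> ang_eq (\<alpha> j + g (Cs j) * 2 * pi * u) (\<alpha> k + g (Cs k) * 2 * pi * v)))"

end

theory Submission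
  imports Defs
begin

text \<open>On arc 1 the robot starts at the scheduled position and
  moves with the schedule of its circle, so after time \<tau> 1 it is at the scheduled position of
  the end point. At each shift the schedule of the current circle is at the link position,
  and synchronization forces the schedule of the next circle to be at the opposite link
  position, which is where the next arc starts.\<close>

lemma ang_eq_sym: "ang_eq x y \<Longrightarrow> ang_eq y x"
  unfolding ang_eq_def by (metis minus_diff_eq mult_minus_right of_int_minus)

lemma ang_eq_trans: "ang_eq x y \<Longrightarrow> ang_eq y z \<Longrightarrow> ang_eq x z"
proof -
  assume "ang_eq x y" "ang_eq y z"
  then obtain k l :: int where "x - y = 2 * pi * of_int k" "y - z = 2 * pi * of_int l"
    unfolding ang_eq_def by blast
  then have "x - z = 2 * pi * of_int (k + l)" by (simp add: algebra_simps)
  then show ?thesis unfolding ang_eq_def by blast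
qed

lemma ang_eq_add: "ang_eq x y \<Longrightarrow> ang_eq (x + c) (y + c)"
  unfolding ang_eq_def by simp

lemma sched_pos_add: "sched_pos f g C (t + u) = sched_pos f g C t + g C * 2 * pi * u"
  unfolding sched_pos_def by (simp add: algebra_simps)

lemma sched_pos_traverse_arc:
  assumes "ang_eq (sched_pos f g C t) \<alpha>" and "ang_eq \<theta> (\<alpha> + g C * 2 * pi * \<tau>)"
  shows "ang_eq (sched_pos f g C (t + \<tau>)) \<theta>"
  unfolding sched_pos_add
  using ang_eq_trans[OF ang_eq_add[OF assms(1)] ang_eq_sym[OF assms(2)]] .

lemma synchronized_link:
  assumes "synchronized E f g" and "(a, b) \<in> E"
    and "ang_eq (sched_pos f g a t) (link_pos a b)"
  shows "ang_eq (sched_pos f g b t) (link_pos b a)"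
  using assms unfolding synchronized_def by fast

lemma ring_path_follows_schedule:
  assumes sync: "synchronized E f g"
    and path: "ring_path E f g T s Cs \<alpha> \<tau> \<theta>"
    and start: "ang_eq (\<alpha> 1) (sched_pos f g (Cs 1) t)"
    and j: "1 \<le> j" "j \<le> s"
  shows "ang_eq (sched_pos f g (Cs j) (t + (\<Sum>i=1..j. \<tau> i))) (\<theta> j)"
  using j
proof (induction j rule: nat_induct_at_least)
  case base
  have "ang_eq (\<theta> 1) (\<alpha> 1 + g (Cs 1) * 2 * pi * \<tau> 1)"
    using path base unfolding ring_path_def by auto
  then show ?case
    using sched_pos_traverse_arc[OF ang_eq_sym[OF start]] by simp
next
  case (Suc j)
  define t' where "t' = t + (\<Sum>i=1..j. \<tau> i)"
  have arrived: "ang_eq (sched_pos f g (Cs j) t') (\<theta> j)"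
    using Suc unfolding t'_def by simp
  have link: "(Cs j, Cs (Suc j)) \<in> E" "ang_eq (\<theta> j) (link_pos (Cs j) (Cs (Suc j)))"
      "ang_eq (\<alpha> (Suc j)) (link_pos (Cs (Suc j)) (Cs j))"
    using path Suc.hyps Suc.prems unfolding ring_path_def by auto
  have "ang_eq (sched_pos f g (Cs (Suc j)) t') (link_pos (Cs (Suc j)) (Cs j))"
    using synchronized_link[OF sync link(1) ang_eq_trans[OF arrived link(2)]] .
  then have shifted: "ang_eq (sched_pos f g (Cs (Suc j)) t') (\<alpha> (Suc j))"
    using ang_eq_trans[OF _ ang_eq_sym[OF link(3)]] by blast
  have "ang_eq (\<theta> (Suc j)) (\<alpha> (Suc j) + g (Cs (Suc j)) * 2 * pi * \<tau> (Suc j))"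
    using path Suc.hyps Suc.prems unfolding ring_path_def by auto
  from sched_pos_traverse_arc[OF shifted this] show ?case
    by (simp add: t'_def add.assoc)
qed

theorem proposition1:
  fixes eps :: real and T :: "complex set" and E :: "(complex \<times> complex) set"
    and f g :: "complex \<Rightarrow> real" and m :: nat and R :: "complex set" and t :: real
    and s :: nat and Cs :: "nat \<Rightarrow> complex" and \<alpha> \<tau> \<theta> :: "nat \<Rightarrow> real"
  assumes scs: "SCS eps T E f g"
    and conf: "partial_config T m R"
    and path: "ring_path E f g T s Cs \<alpha> \<tau> \<theta>"
    and simple: "simple_path g s Cs \<alpha> \<tau>"
    and start: "Cs 1 \<in> R" "ang_eq (\<alpha> 1) (sched_pos f g (Cs 1) t)"
    and finish: "Cs s \<in> R" "ang_eq (\<theta> s) (sched_pos f g (Cs s) t)"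
    and other: "Cs s \<noteq> Cs 1"
  shows "\<forall>j\<in>{1..s}. ang_eq (f (Cs j) + g (Cs j) * 2 * pi * (t + (\<Sum>i=1..j. \<tau> i))) (\<theta> j)"
proof
  fix j assume "j \<in> {1..s}"
  moreover have "synchronized E f g" using scs unfolding SCS_def by blast
  ultimately show "ang_eq (f (Cs j) + g (Cs j) * 2 * pi * (t + (\<Sum>i=1..j. \<tau> i))) (\<theta> j)"
    using ring_path_follows_schedule[OF _ path start(2)] unfolding sched_pos_def by auto
qed

end
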